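(* Let $Y^s$ and $Y^d$ be positive random variables, let $n_\mu$ denote the law of $Y^s$, and let $(C_i)_{i\ge 1}$ be i.i.d. copies of a random variable $C$ with $\mathbb{P}(C>0)=1$. Assume that $Y^s$, $Y^d$ and $(C_i)_{i\ge1}$ are mutually independent and that $\mathbb{E}[(Y^s)^2]+\mathbb{E}[C^2]<\infty$. Set $D_0=0$, $D_n=C_1+\dots+C_n$, $\overline{B}(t)=\inf\{n\ge 1: D_n\ge t\}=1+\sum_{n\ge1}\mathbf{1}_{D_n<t}$, $K^r=\overline{B}(Y^s)$, $V^s=D_{K^r}$, $Z^d=Y^s+Y^d$, $X^r=\min(V^s,Z^d)$ and $P_d=\mathbb{P}(V^s\ge Z^d)$. Let $R_s(x)=\mathbb{P}(Y^s>x)$, $R_d(x)=\mathbb{P}(Y^d>x)$ and $L(s)=\mathbb{E}[e^{-sC}]$ for $s\ge0$. Then $$\mathbb{E}[K^r]=\sum_{n\ge0}\mathbb{E}[R_s(D_n)],\qquad 1-P_d=\int_0^{\infty}\mathbb{E}\big[R_d(D_{\overline{B}(t)}-t)\big]\,n_\mu(dt),$$ $$\mathbb{E}[X^r]=\mathbb{E}[Y^s]+\int_0^\infty\int_0^\infty \mathbb{P}\big(D_{\overline{B}(t)}-t>y\big)R_d(y)\,dy\,n_\mu(dt).$$ If in addition $Y^d$ follows the exponential law with parameter $\lambda>0$, then $$1-P_d=(1-L(\lambda))\sum_{k\ge1}\mathbb{E}\Big[e^{-\lambda D_k}\int_{[0,D_k]}e^{\lambda t}\,n_\mu(dt)\Big]-L(\lambda)\,n_\mu(\{0\}),\qquad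 \mathbb{E}[X^r]=\mathbb{E}[Y^s]+\frac{1}{\lambda}P_d .$$
   Context: Model of a deteriorating system with condition-based maintenance: $Y^s$ is the time from repair to damage, $Y^d$ the time from damage to failure, $C_i$ the time between the $(i-1)$-th and $i$-th inspections, so $D_n$ is the age of the system at the $n$-th inspection; $K^r$ is the index of the first inspection at or after the damage, and the system is renewed at time $X^r$ (at detection of the damage, or at failure if it occurs first). *)

theory Defs
  imports "HOL-Probability.Probability"
begin

text \<open>Index type for the independent family (Y^s, Y^d, C_1, C_2, ...).\<close>
datatype idx = IYs | IYd | IC nat

definition famRV :: "('a \<Rightarrow> real) \<Rightarrow> ('a \<Rightarrow> real) \<Rightarrow> (nat \<Rightarrow> 'a \<Rightarrow> real) \<Rightarrow> idx \<Rightarrow> 'a \<Rightarrow> real" where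
  "famRV Ys Yd C i = (case i of IYs \<Rightarrow> Ys | IYd \<Rightarrow> Yd | IC n \<Rightarrow> C n)"

definition Dsum :: "(nat \<Rightarrow> 'a \<Rightarrow> real) \<Rightarrow> nat \<Rightarrow> 'a \<Rightarrow> real" where
  "Dsum C n \<omega> = (\<Sum>i\<in>{1..n}. C i \<omega>)"

definition Bbar :: "(nat \<Rightarrow> 'a \<Rightarrow> real) \<Rightarrow> real \<Rightarrow> 'a \<Rightarrow> nat" where
  "Bbar C t \<omega> = (LEAST n. 1 \<le> n \<and> t \<le> Dsum C n \<omega>)"

definition Kr :: "(nat \<Rightarrow> 'a \<Rightarrow> real) \<Rightarrow> ('a \<Rightarrow> real) \<Rightarrow> 'a \<Rightarrow> nat" where
  "Kr C Ys \<omega> = Bbar C (Ys \<omega>) \<omega>"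

definition Vs :: "(nat \<Rightarrow> 'a \<Rightarrow> real) \<Rightarrow> ('a \<Rightarrow> real) \<Rightarrow> 'a \<Rightarrow> real" where
  "Vs C Ys \<omega> = Dsum C (Kr C Ys \<omega>) \<omega>"

definition Zd :: "('a \<Rightarrow> real) \<Rightarrow> ('a \<Rightarrow> real) \<Rightarrow> 'a \<Rightarrow> real" where
  "Zd Ys Yd \<omega> = Ys \<omega> + Yd \<omega>"

definition Xr :: "(nat \<Rightarrow> 'a \<Rightarrow> real) \<Rightarrow> ('a \<Rightarrow> real) \<Rightarrow> ('a \<Rightarrow> real) \<Rightarrow> 'a \<Rightarrow> real" where
  "Xr C Ys Yd \<omega> = min (Vs C Ys \<omega>) (Zd Ys Yd \<omega>)"

definition Pd :: "'a measure \<Rightarrow> (nat \<Rightarrow> 'a \<Rightarrow> real) \<Rightarrow> ('a \<Rightarrow> real) \<Rightarrow> ('a \<Rightarrow> real) \<Rightarrow> real" where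
  "Pd M C Ys Yd = measure M {\<omega>\<in>space M. Zd Ys Yd \<omega> \<le> Vs C Ys \<omega>}"

definition surv :: "'a measure \<Rightarrow> ('a \<Rightarrow> real) \<Rightarrow> real \<Rightarrow> real" where
  "surv M X x = measure M {\<omega>\<in>space M. x < X \<omega>}"

definition Lap :: "'a measure \<Rightarrow> ('a \<Rightarrow> real) \<Rightarrow> real \<Rightarrow> real" where
  "Lap M C0 s = (\<integral>\<omega>. exp (- s * C0 \<omega>) \<partial>M)"

end

theory Submission
  imports Defs
begin

text \<open>
  The times \<open>Y\<^sup>s\<close>, \<open>Y\<^sup>d\<close> and the inspection sequence \<open>(C\<^sub>i)\<close> are independent, so each
  expectation is computed by integrating them out one at a time (Fubini on the joint law).
  With the overshoot \<open>O(t) = D(B(t)) - t\<close> of the inspection times over \<open>t\<close>, one has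
  \<open>K\<^sup>r = \<Sum>\<^sub>n 1{D\<^sub>n < Y\<^sup>s}\<close> and \<open>V\<^sup>s = Y\<^sup>s + O(Y\<^sup>s)\<close>, hence \<open>1 - P\<^sub>d = P(O(Y\<^sup>s) < Y\<^sup>d)\<close> and
  \<open>X\<^sup>r = Y\<^sup>s + min(O(Y\<^sup>s), Y\<^sup>d)\<close>; the tail formula for the mean of the minimum of two
  independent variables gives \<open>E[X\<^sup>r]\<close>.

  For exponential \<open>Y\<^sup>d\<close>, memorylessness gives \<open>1 - P\<^sub>d = E[exp(-\<lambda> O(Y\<^sup>s))]\<close> and
  \<open>E[min(a, Y\<^sup>d)] = (1 - exp(-\<lambda> a))/\<lambda>\<close>, whence \<open>E[X\<^sup>r]\<close>. For the series, put
  \<open>q\<^sub>k = 1{Y\<^sup>s \<le> D\<^sub>k} exp(-\<lambda> (D\<^sub>k - Y\<^sup>s))\<close>. Then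
  \<open>q\<^sub>k\<^sub>+\<^sub>1 = exp(-\<lambda> C\<^sub>k\<^sub>+\<^sub>1) q\<^sub>k + 1{K\<^sup>r = k+1} q\<^sub>k\<^sub>+\<^sub>1\<close> with independent factors, so the
  \<open>E[q\<^sub>k]\<close> obey a linear recursion of ratio \<open>L(\<lambda>) < 1\<close> whose inhomogeneous terms sum to
  \<open>E[exp(-\<lambda> O(Y\<^sup>s))] = 1 - P\<^sub>d\<close>; the atom \<open>n\<^sub>\<mu>{0}\<close> vanishes because \<open>Y\<^sup>s > 0\<close>.
\<close>

lemma (in prob_space) nn_integral_indep_var_distr:
  assumes ind: "indep_var S X T Y"
    and h[measurable]: "(\<lambda>(x, y). h x y) \<in> borel_measurable (S \<Otimes>\<^sub>M T)"
  shows "(\<integral>\<^sup>+\<omega>. h (X \<omega>) (Y \<omega>) \<partial>M) = (\<integral>\<^sup>+x. (\<integral>\<^sup>+\<omega>. h x (Y \<omega>) \<partial>M) \<partial>distr M S X)"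
proof -
  have [measurable]: "X \<in> measurable M S" "Y \<in> measurable M T"
    using indep_var_rv1[OF ind] indep_var_rv2[OF ind] by auto
  interpret PX: prob_space "distr M S X" by (rule prob_space_distr) simp
  interpret PY: prob_space "distr M T Y" by (rule prob_space_distr) simp
  interpret XY: pair_prob_space "distr M S X" "distr M T Y" ..
  have "(\<integral>\<^sup>+\<omega>. h (X \<omega>) (Y \<omega>) \<partial>M)
      = (\<integral>\<^sup>+p. (\<lambda>(x, y). h x y) p \<partial>distr M (S \<Otimes>\<^sub>M T) (\<lambda>\<omega>. (X \<omega>, Y \<omega>)))"
    by (subst nn_integral_distr) auto
  also have "\<dots> = (\<integral>\<^sup>+p. (\<lambda>(x, y). h x y) p \<partial>(distr M S X \<Otimes>\<^sub>M distr M T Y))"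
    using ind by (simp add: indep_var_distribution_eq)
  also have "\<dots> = (\<integral>\<^sup>+x. (\<integral>\<^sup>+y. h x y \<partial>distr M T Y) \<partial>distr M S X)"
    by (subst PY.nn_integral_fst[symmetric]) auto
  also have "\<dots> = (\<integral>\<^sup>+x. (\<integral>\<^sup>+\<omega>. h x (Y \<omega>) \<partial>M) \<partial>distr M S X)"
  proof (intro nn_integral_cong)
    fix x assume "x \<in> space (distr M S X)"
    then have [measurable]: "h x \<in> borel_measurable T"
      using measurable_Pair2[OF h, of x] by auto
    show "(\<integral>\<^sup>+y. h x y \<partial>distr M T Y) = (\<integral>\<^sup>+\<omega>. h x (Y \<omega>) \<partial>M)"
      by (subst nn_integral_distr) auto
  qed
  finally show ?thesis .
qed

lemma (in prob_space) nn_integral_indep_var: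
  assumes ind: "indep_var S X T Y"
    and h[measurable]: "(\<lambda>(x, y). h x y) \<in> borel_measurable (S \<Otimes>\<^sub>M T)"
  shows "(\<integral>\<^sup>+\<omega>. h (X \<omega>) (Y \<omega>) \<partial>M) = (\<integral>\<^sup>+\<omega>'. (\<integral>\<^sup>+\<omega>. h (X \<omega>') (Y \<omega>) \<partial>M) \<partial>M)"
proof -
  have [measurable]: "X \<in> measurable M S" "Y \<in> measurable M T"
    using indep_var_rv1[OF ind] indep_var_rv2[OF ind] by auto
  have "(\<lambda>x. \<integral>\<^sup>+\<omega>. h x (Y \<omega>) \<partial>M) \<in> borel_measurable S"
    by measurable
  then show ?thesis
    unfolding nn_integral_indep_var_distr[OF ind h] by (subst nn_integral_distr) auto
qed

lemma (in prob_space) integral_indep_var: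
  fixes h :: "'b \<Rightarrow> 'b \<Rightarrow> real"
  assumes ind: "indep_var S X T Y"
    and h[measurable]: "(\<lambda>(x, y). h x y) \<in> borel_measurable (S \<Otimes>\<^sub>M T)"
    and h_nonneg: "\<And>x y. 0 \<le> h x y" and h_bounded: "\<And>x y. h x y \<le> B"
  shows "(\<integral>\<omega>. h (X \<omega>) (Y \<omega>) \<partial>M) = (\<integral>\<omega>'. (\<integral>\<omega>. h (X \<omega>') (Y \<omega>) \<partial>M) \<partial>M)"
proof -
  have [measurable]: "X \<in> measurable M S" "Y \<in> measurable M T"
    using indep_var_rv1[OF ind] indep_var_rv2[OF ind] by auto
  let ?I = "\<lambda>\<omega>'. \<integral>\<^sup>+\<omega>. ennreal (h (X \<omega>') (Y \<omega>)) \<partial>M"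
  have inner: "(\<integral>\<omega>. h (X \<omega>') (Y \<omega>) \<partial>M) = enn2real (?I \<omega>')" if "\<omega>' \<in> space M" for \<omega>'
  proof (rule integral_eq_nn_integral)
    have "X \<omega>' \<in> space S"
      using that by (rule measurable_space[rotated]) measurable
    then show "(\<lambda>\<omega>. h (X \<omega>') (Y \<omega>)) \<in> borel_measurable M"
      using measurable_Pair2[OF h] by measurable
  qed (simp add: h_nonneg)
  have finite: "?I \<omega>' < top" for \<omega>'
  proof -
    have "?I \<omega>' \<le> (\<integral>\<^sup>+\<omega>. ennreal B \<partial>M)"
      by (intro nn_integral_mono ennreal_leI h_bounded)
    also have "\<dots> < top"
      by (simp add: emeasure_space_1)
    finally show ?thesis .
  qed
  have "(\<integral>\<omega>'. (\<integral>\<omega>. h (X \<omega>') (Y \<omega>) \<partial>M) \<partial>M) = (\<integral>\<omega>'. enn2real (?I \<omega>') \<partial>M)"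
    by (intro Bochner_Integration.integral_cong refl inner)
  also have "\<dots> = enn2real (\<integral>\<^sup>+\<omega>'. ennreal (enn2real (?I \<omega>')) \<partial>M)"
    by (rule integral_eq_nn_integral) auto
  also have "\<dots> = enn2real (\<integral>\<^sup>+\<omega>. ennreal (h (X \<omega>) (Y \<omega>)) \<partial>M)"
    using nn_integral_indep_var[OF ind, of "\<lambda>x y. ennreal (h x y)"] by (simp add: finite)
  also have "\<dots> = (\<integral>\<omega>. h (X \<omega>) (Y \<omega>) \<partial>M)"
    by (rule integral_eq_nn_integral[symmetric]) (auto simp: h_nonneg)
  finally show ?thesis ..
qed

lemma surv_nonneg: "0 \<le> surv M X x"
  by (simp add: surv_def)

lemma (in prob_space) surv_le_1: "surv M X x \<le> 1"
  by (simp add: surv_def)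

lemma (in prob_space) borel_measurable_surv[measurable]:
  assumes "X \<in> borel_measurable M"
  shows "surv M X \<in> borel_measurable borel"
proof -
  have "mono (\<lambda>x. - surv M X x)"
    unfolding surv_def mono_def using assms by (auto intro!: finite_measure_mono)
  from borel_measurable_mono[OF this] show ?thesis
    by (simp add: borel_measurable_uminus_eq)
qed

lemma (in prob_space) emeasure_indep_var_less:
  assumes ind: "indep_var S X T Y"
    and [measurable]: "f \<in> borel_measurable S" "g \<in> borel_measurable T"
  shows "emeasure M {\<omega>\<in>space M. f (X \<omega>) < g (Y \<omega>)}
    = (\<integral>\<^sup>+\<omega>. ennreal (surv M (\<lambda>\<omega>. g (Y \<omega>)) (f (X \<omega>))) \<partial>M)"
proof -
  have [measurable]: "X \<in> measurable M S" "Y \<in> measurable M T"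
    using indep_var_rv1[OF ind] indep_var_rv2[OF ind] by auto
  have "emeasure M {\<omega>\<in>space M. f (X \<omega>) < g (Y \<omega>)}
      = (\<integral>\<^sup>+\<omega>. indicator {\<omega>\<in>space M. f (X \<omega>) < g (Y \<omega>)} \<omega> \<partial>M)"
    by (rule nn_integral_indicator[symmetric]) measurable
  also have "\<dots> = (\<integral>\<^sup>+\<omega>. of_bool (f (X \<omega>) < g (Y \<omega>)) \<partial>M)"
    by (intro nn_integral_cong) (simp add: indicator_def)
  also have "\<dots> = (\<integral>\<^sup>+\<omega>'. (\<integral>\<^sup>+\<omega>. of_bool (f (X \<omega>') < g (Y \<omega>)) \<partial>M) \<partial>M)"
    by (rule nn_integral_indep_var[OF ind, where h="\<lambda>x y. of_bool (f x < g y)"]) measurable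
  also have "\<dots> = (\<integral>\<^sup>+\<omega>'. ennreal (surv M (\<lambda>\<omega>. g (Y \<omega>)) (f (X \<omega>'))) \<partial>M)"
  proof (intro nn_integral_cong)
    fix \<omega>'
    have "(\<integral>\<^sup>+\<omega>. of_bool (f (X \<omega>') < g (Y \<omega>)) \<partial>M)
        = (\<integral>\<^sup>+\<omega>. indicator {\<omega>\<in>space M. f (X \<omega>') < g (Y \<omega>)} \<omega> \<partial>M)"
      by (intro nn_integral_cong) (simp add: indicator_def)
    then show "(\<integral>\<^sup>+\<omega>. of_bool (f (X \<omega>') < g (Y \<omega>)) \<partial>M) = ennreal (surv M (\<lambda>\<omega>. g (Y \<omega>)) (f (X \<omega>')))"
      by (simp add: surv_def emeasure_eq_measure)
  qed
  finally show ?thesis .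
qed

lemma nn_integral_lborel_min:
  "(\<integral>\<^sup>+y. of_bool (0 \<le> y \<and> y < a \<and> y < b) \<partial>lborel) = ennreal (min a (b::real))"
proof (cases "0 \<le> min a b")
  case True
  have "(\<integral>\<^sup>+y. of_bool (0 \<le> y \<and> y < a \<and> y < b) \<partial>lborel) = (\<integral>\<^sup>+y. indicator {0..<min a b} y \<partial>lborel)"
    by (intro nn_integral_cong) (auto simp: indicator_def)
  with True show ?thesis by simp
next
  case False
  then have "of_bool (0 \<le> y \<and> y < a \<and> y < b) = (0::ennreal)" for y
    by auto
  moreover have "min a b \<le> 0"
    using False by linarith
  ultimately show ?thesis
    by (simp add: ennreal_neg del: of_bool_eq_0_iff)
qed

text \<open>With independent copies \<open>\<omega>'\<close>, \<open>\<omega>\<close> this is the tail formula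
  \<open>E min(A,B) = \<integral>\<^sub>0\<^sup>\<infinity> P(A>y) P(B>y) dy\<close> for independent \<open>A\<close>, \<open>B\<close>.\<close>
lemma (in prob_space) nn_integral_min_eq_surv_product:
  assumes [measurable]: "a \<in> borel_measurable M" "b \<in> borel_measurable M"
  shows "(\<integral>\<^sup>+\<omega>'. (\<integral>\<^sup>+\<omega>. ennreal (min (a \<omega>') (b \<omega>)) \<partial>M) \<partial>M)
    = (\<integral>\<^sup>+y\<in>{0..}. ennreal (surv M a y * surv M b y) \<partial>lborel)"
proof -
  interpret LM: pair_sigma_finite lborel M ..
  let ?k = "\<lambda>y \<omega>' \<omega>. of_bool (0 \<le> y \<and> y < a \<omega>' \<and> y < b \<omega>) :: ennreal"
  have "(\<integral>\<^sup>+\<omega>'. (\<integral>\<^sup>+\<omega>. ennreal (min (a \<omega>') (b \<omega>)) \<partial>M) \<partial>M)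
      = (\<integral>\<^sup>+\<omega>'. (\<integral>\<^sup>+\<omega>. (\<integral>\<^sup>+y. ?k y \<omega>' \<omega> \<partial>lborel) \<partial>M) \<partial>M)"
    by (simp add: nn_integral_lborel_min)
  also have "\<dots> = (\<integral>\<^sup>+\<omega>'. (\<integral>\<^sup>+y. (\<integral>\<^sup>+\<omega>. ?k y \<omega>' \<omega> \<partial>M) \<partial>lborel) \<partial>M)"
    by (intro nn_integral_cong LM.Fubini') measurable
  also have "\<dots> = (\<integral>\<^sup>+y. (\<integral>\<^sup>+\<omega>'. (\<integral>\<^sup>+\<omega>. ?k y \<omega>' \<omega> \<partial>M) \<partial>M) \<partial>lborel)"
    by (rule LM.Fubini') measurable
  also have "\<dots> = (\<integral>\<^sup>+y\<in>{0..}. ennreal (surv M a y * surv M b y) \<partial>lborel)"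
  proof (intro nn_integral_cong)
    fix y :: real
    define A where "A = {\<omega>\<in>space M. y < a \<omega>}"
    define B where "B = {\<omega>\<in>space M. y < b \<omega>}"
    have [measurable]: "A \<in> sets M" "B \<in> sets M"
      unfolding A_def B_def by measurable
    have "(\<integral>\<^sup>+\<omega>'. (\<integral>\<^sup>+\<omega>. ?k y \<omega>' \<omega> \<partial>M) \<partial>M)
        = (\<integral>\<^sup>+\<omega>'. (\<integral>\<^sup>+\<omega>. of_bool (0 \<le> y) * indicator A \<omega>' * indicator B \<omega> \<partial>M) \<partial>M)"
      by (intro nn_integral_cong) (auto simp: A_def B_def indicator_def)
    also have "\<dots> = of_bool (0 \<le> y) * emeasure M A * emeasure M B"
      by (simp add: nn_integral_cmult nn_integral_multc mult.assoc)
    also have "\<dots> = ennreal (surv M a y * surv M b y) * indicator {0..} y"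
      by (simp add: A_def B_def surv_def emeasure_eq_measure ennreal_mult indicator_def)
    finally show "(\<integral>\<^sup>+\<omega>'. (\<integral>\<^sup>+\<omega>. ?k y \<omega>' \<omega> \<partial>M) \<partial>M) = ennreal (surv M a y * surv M b y) * indicator {0..} y" .
  qed
  finally show ?thesis .
qed

lemma linear_recurrence_sums:
  fixes a b :: "nat \<Rightarrow> real"
  assumes L: "0 \<le> L" "L < 1" and a_nonneg: "\<And>j. 0 \<le> a j" and b_nonneg: "\<And>j. 0 \<le> b j"
    and a0: "a 0 = 0" and a_Suc: "\<And>j. a (Suc j) = L * a j + b j" and b_sums: "b sums B"
  shows "summable (\<lambda>j. a (Suc j)) \<and> B = (1 - L) * (\<Sum>j. a (Suc j))"
proof -
  have bound: "(\<Sum>j<n. a (Suc j)) \<le> B / (1 - L)" for n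
  proof -
    let ?T = "\<Sum>j<n. a (Suc j)"
    have "(\<Sum>j<n. a j) \<le> (\<Sum>j<Suc n. a j)"
      using a_nonneg by (simp add: sum.lessThan_Suc)
    also have "\<dots> = ?T"
      by (subst sum.lessThan_Suc_shift) (simp add: a0)
    finally have "(\<Sum>j<n. a j) \<le> ?T" .
    moreover have "(\<Sum>j<n. b j) \<le> B"
      using sum_le_suminf[OF sums_summable[OF b_sums], of "{..<n}"] b_nonneg sums_unique[OF b_sums] by auto
    moreover have "?T = L * (\<Sum>j<n. a j) + (\<Sum>j<n. b j)"
      by (simp add: a_Suc sum.distrib sum_distrib_left)
    ultimately have "?T \<le> L * ?T + B"
      using L by (smt (verit) mult_left_mono)
    then show ?thesis
      using L by (simp add: field_simps)
  qed
  have summable: "summable (\<lambda>j. a (Suc j))"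
    by (rule summableI_nonneg_bounded[OF _ bound]) (use a_nonneg in auto)
  define S where "S = (\<Sum>j. a (Suc j))"
  have "(\<lambda>j. a (Suc j)) sums S"
    using summable by (simp add: S_def summable_sums)
  moreover have "(\<lambda>j. a (Suc j)) sums (L * S + B)"
  proof -
    have "a sums S"
      using \<open>(\<lambda>j. a (Suc j)) sums S\<close> sums_Suc_iff[of a S] a0 by simp
    then have "(\<lambda>j. L * a j + b j) sums (L * S + B)"
      by (intro sums_add sums_mult b_sums)
    then show ?thesis
      by (simp add: a_Suc)
  qed
  ultimately have "S = L * S + B"
    by (rule sums_unique2)
  with summable show ?thesis
    unfolding S_def by (simp add: algebra_simps)
qed

definition overshoot :: "(nat \<Rightarrow> 'a \<Rightarrow> real) \<Rightarrow> real \<Rightarrow> 'a \<Rightarrow> real" where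
  "overshoot C t \<omega> = Dsum C (Bbar C t \<omega>) \<omega> - t"

lemma Dsum_0[simp]: "Dsum C 0 \<omega> = 0"
  by (simp add: Dsum_def)

lemma Dsum_Suc: "Dsum C (Suc n) \<omega> = Dsum C n \<omega> + C (Suc n) \<omega>"
  by (simp add: Dsum_def)

context
  fixes C :: "nat \<Rightarrow> 'a \<Rightarrow> real" and \<omega> :: 'a
  assumes C_pos: "\<forall>i\<ge>1. 0 < C i \<omega>" and Dsum_unbounded: "\<forall>t. \<exists>n. t \<le> Dsum C n \<omega>"
begin

lemma Dsum_mono: "m \<le> n \<Longrightarrow> Dsum C m \<omega> \<le> Dsum C n \<omega>"
  by (rule lift_Suc_mono_le[of "\<lambda>n. Dsum C n \<omega>"]) (use C_pos in \<open>auto simp: Dsum_Suc less_imp_le\<close>)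

lemma Bbar_exists: "\<exists>n. 1 \<le> n \<and> t \<le> Dsum C n \<omega>"
proof -
  obtain n where "t \<le> Dsum C n \<omega>"
    using Dsum_unbounded by blast
  then have "t \<le> Dsum C (max n 1) \<omega>"
    using Dsum_mono[of n "max n 1"] by auto
  then show ?thesis by (intro exI[of _ "max n 1"]) auto
qed

lemma Bbar_ge_1: "1 \<le> Bbar C t \<omega>"
  unfolding Bbar_def using LeastI_ex[OF Bbar_exists[of t]] by blast

lemma le_Dsum_Bbar: "t \<le> Dsum C (Bbar C t \<omega>) \<omega>"
  unfolding Bbar_def using LeastI_ex[OF Bbar_exists[of t]] by blast

lemma overshoot_nonneg: "0 \<le> overshoot C t \<omega>"
  using le_Dsum_Bbar[of t] by (simp add: overshoot_def)

lemma Dsum_less_iff_less_Bbar: "0 < t \<Longrightarrow> Dsum C n \<omega> < t \<longleftrightarrow> n < Bbar C t \<omega>"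
proof
  assume "0 < t" "Dsum C n \<omega> < t"
  then show "n < Bbar C t \<omega>"
    using le_Dsum_Bbar[of t] Dsum_mono[of "Bbar C t \<omega>" n] by (cases "n < Bbar C t \<omega>") auto
next
  assume "0 < t" "n < Bbar C t \<omega>"
  then show "Dsum C n \<omega> < t"
    unfolding Bbar_def using not_less_Least[of n "\<lambda>n. 1 \<le> n \<and> t \<le> Dsum C n \<omega>"]
    by (cases n) auto
qed

lemma Bbar_eq_count: "0 < t \<Longrightarrow> (\<Sum>n. of_bool (Dsum C n \<omega> < t) :: ennreal) = of_nat (Bbar C t \<omega>)"
  by (subst suminf_finite[of "{..<Bbar C t \<omega>}"])
     (auto simp: Dsum_less_iff_less_Bbar)

lemma Bbar_eq_iff:
  "0 < t \<Longrightarrow> Bbar C t \<omega> = Suc k \<longleftrightarrow> Dsum C k \<omega> < t \<and> t \<le> Dsum C (Suc k) \<omega>"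
  using Dsum_less_iff_less_Bbar[of t k] Dsum_less_iff_less_Bbar[of t "Suc k"] by auto

end

lemma measurable_Bbar:
  assumes [measurable]: "\<And>i. 1 \<le> i \<Longrightarrow> C i \<in> borel_measurable N"
  shows "(\<lambda>(t, \<omega>). Bbar C t \<omega>) \<in> measurable (borel \<Otimes>\<^sub>M N) (count_space UNIV)"
proof -
  have [measurable]: "(\<lambda>\<omega>. Dsum C n \<omega>) \<in> borel_measurable N" for n
    unfolding Dsum_def by (intro borel_measurable_sum) auto
  show ?thesis
    unfolding Bbar_def by measurable
qed

lemma borel_measurable_overshoot:
  assumes "\<And>i. 1 \<le> i \<Longrightarrow> C i \<in> borel_measurable N"
  shows "(\<lambda>(t, \<omega>). overshoot C t \<omega>) \<in> borel_measurable (borel \<Otimes>\<^sub>M N)"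
proof -
  have [measurable]: "(\<lambda>\<omega>. Dsum C n \<omega>) \<in> borel_measurable N" for n
    unfolding Dsum_def using assms by (intro borel_measurable_sum) auto
  have "(\<lambda>p. (\<lambda>n p. Dsum C n (snd p)) ((\<lambda>(t, \<omega>). Bbar C t \<omega>) p) p) \<in> borel_measurable (borel \<Otimes>\<^sub>M N)"
    by (rule measurable_compose_countable[OF _ measurable_Bbar[OF assms]]) measurable
  then show ?thesis
    unfolding overshoot_def by (simp add: case_prod_beta) measurable
qed

lemma Vs_eq_overshoot: "Vs C Ys \<omega> = Ys \<omega> + overshoot C (Ys \<omega>) \<omega>"
  by (simp add: Vs_def Kr_def overshoot_def)

lemma Xr_eq_overshoot: "Xr C Ys Yd \<omega> = Ys \<omega> + min (overshoot C (Ys \<omega>) \<omega>) (Yd \<omega>)"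
  by (simp add: Xr_def Vs_eq_overshoot Zd_def)

text \<open>To condition on the inspection sequence, its functionals are evaluated on sample paths
  in the product space over \<open>Cidx\<close>: with \<open>coord\<close> as increments, \<open>Dsum\<close>, \<open>Bbar\<close> and
  \<open>overshoot\<close> apply to paths unchanged.\<close>
definition Cidx :: "idx set" where
  "Cidx = {IC i | i. 1 \<le> i}"

definition coord :: "nat \<Rightarrow> (idx \<Rightarrow> real) \<Rightarrow> real" where
  "coord i c = c (IC i)"

lemma IC_in_Cidx[simp]: "IC i \<in> Cidx \<longleftrightarrow> 1 \<le> i"
  and IYs_notin_Cidx[simp]: "IYs \<notin> Cidx"
  and IYd_notin_Cidx[simp]: "IYd \<notin> Cidx"
  by (auto simp: Cidx_def)

lemma measurable_coord: "1 \<le> i \<Longrightarrow> coord i \<in> borel_measurable (PiM Cidx (\<lambda>_. borel))"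
  unfolding coord_def by (intro measurable_component_singleton) simp

lemma measurable_Dsum_coord[measurable]:
  "(\<lambda>c. Dsum coord n c) \<in> borel_measurable (PiM Cidx (\<lambda>_. borel))"
  unfolding Dsum_def by (intro borel_measurable_sum measurable_coord) simp

lemma measurable_overshoot_coord[measurable (raw)]:
  assumes "f \<in> borel_measurable N" "g \<in> measurable N (PiM Cidx (\<lambda>_. borel))"
  shows "(\<lambda>x. overshoot coord (f x) (g x)) \<in> borel_measurable N"
  using measurable_compose[OF measurable_Pair[OF assms] borel_measurable_overshoot[OF measurable_coord]]
  by simp

lemma measurable_path_components[measurable]:
  "(\<lambda>w. w IYs) \<in> borel_measurable (PiM (insert IYs Cidx) (\<lambda>_. borel))"
  "(\<lambda>w. restrict w Cidx) \<in> measurable (PiM (insert IYs Cidx) (\<lambda>_. borel)) (PiM Cidx (\<lambda>_. borel))"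
  by (auto intro: measurable_component_singleton measurable_restrict_subset)

locale inspection_model = prob_space M for M :: "'a measure" +
  fixes Ys Yd C0 :: "'a \<Rightarrow> real" and C :: "nat \<Rightarrow> 'a \<Rightarrow> real"
  assumes Ys_pos: "AE \<omega> in M. 0 < Ys \<omega>"
    and Yd_pos: "AE \<omega> in M. 0 < Yd \<omega>"
    and C0_measurable[measurable]: "C0 \<in> borel_measurable M"
    and C0_pos: "measure M {\<omega>\<in>space M. 0 < C0 \<omega>} = 1"
    and C_distr: "\<And>i. 1 \<le> i \<Longrightarrow> distr M borel (C i) = distr M borel C0"
    and indep: "indep_vars (\<lambda>_. borel) (famRV Ys Yd C) ({IYs, IYd} \<union> Cidx)"
    and Ys_square_integrable: "integrable M (\<lambda>\<omega>. (Ys \<omega>)\<^sup>2)"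
begin

lemma famRV_measurable: "i \<in> {IYs, IYd} \<union> Cidx \<Longrightarrow> famRV Ys Yd C i \<in> borel_measurable M"
  using indep unfolding indep_vars_def by auto

lemma Ys_measurable[measurable]: "Ys \<in> borel_measurable M"
  using famRV_measurable[of IYs] by (simp add: famRV_def)

lemma Yd_measurable[measurable]: "Yd \<in> borel_measurable M"
  using famRV_measurable[of IYd] by (simp add: famRV_def)

lemma C_measurable: "1 \<le> i \<Longrightarrow> C i \<in> borel_measurable M"
  using famRV_measurable[of "IC i"] by (simp add: famRV_def)

definition subfamily :: "idx set \<Rightarrow> 'a \<Rightarrow> idx \<Rightarrow> real" where
  "subfamily A \<omega> = restrict (\<lambda>i. famRV Ys Yd C i \<omega>) A"

lemma measurable_subfamily[measurable]:
  "subfamily Cidx \<in> measurable M (PiM Cidx (\<lambda>_. borel))"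
  "subfamily {IYs} \<in> measurable M (PiM {IYs} (\<lambda>_. borel))"
  "subfamily {IYd} \<in> measurable M (PiM {IYd} (\<lambda>_. borel))"
  "subfamily (insert IYs Cidx) \<in> measurable M (PiM (insert IYs Cidx) (\<lambda>_. borel))"
  unfolding subfamily_def by (auto intro!: measurable_restrict famRV_measurable)

lemma indep_subfamily:
  "A \<inter> B = {} \<Longrightarrow> A \<subseteq> {IYs, IYd} \<union> Cidx \<Longrightarrow> B \<subseteq> {IYs, IYd} \<union> Cidx
    \<Longrightarrow> indep_var (PiM A (\<lambda>_. borel)) (subfamily A) (PiM B (\<lambda>_. borel)) (subfamily B)"
  unfolding subfamily_def by (rule indep_var_restrict[OF indep])

lemma indep_subfamily_pairs:
  "indep_var (PiM Cidx (\<lambda>_. borel)) (subfamily Cidx) (PiM {IYs} (\<lambda>_. borel)) (subfamily {IYs})"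
  "indep_var (PiM {IYs} (\<lambda>_. borel)) (subfamily {IYs}) (PiM Cidx (\<lambda>_. borel)) (subfamily Cidx)"
  "indep_var (PiM (insert IYs Cidx) (\<lambda>_. borel)) (subfamily (insert IYs Cidx))
     (PiM {IYd} (\<lambda>_. borel)) (subfamily {IYd})"
  by (auto intro!: indep_subfamily)

lemma subfamily_apply[simp]:
  "subfamily {IYs} \<omega> IYs = Ys \<omega>" "subfamily {IYd} \<omega> IYd = Yd \<omega>"
  "subfamily (insert IYs Cidx) \<omega> IYs = Ys \<omega>"
  "1 \<le> i \<Longrightarrow> coord i (subfamily Cidx \<omega>) = C i \<omega>"
  "restrict (subfamily (insert IYs Cidx) \<omega>) Cidx = subfamily Cidx \<omega>"
  by (auto simp: subfamily_def famRV_def coord_def fun_eq_iff)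

lemma Dsum_subfamily: "Dsum coord n (subfamily Cidx \<omega>) = Dsum C n \<omega>"
  unfolding Dsum_def by (intro sum.cong) auto

lemma Bbar_subfamily: "Bbar coord t (subfamily Cidx \<omega>) = Bbar C t \<omega>"
  unfolding Bbar_def Dsum_subfamily ..

lemma overshoot_subfamily: "overshoot coord t (subfamily Cidx \<omega>) = overshoot C t \<omega>"
  unfolding overshoot_def Bbar_subfamily Dsum_subfamily ..

lemma Dsum_measurable[measurable]: "(\<lambda>\<omega>. Dsum C n \<omega>) \<in> borel_measurable M"
  unfolding Dsum_subfamily[symmetric] by measurable

lemma overshoot_measurable[measurable (raw)]:
  "f \<in> borel_measurable N \<Longrightarrow> g \<in> measurable N M \<Longrightarrow> (\<lambda>x. overshoot C (f x) (g x)) \<in> borel_measurable N"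
  unfolding overshoot_subfamily[symmetric] by (erule measurable_overshoot_coord) measurable

lemma AE_C_pos: assumes "1 \<le> i" shows "AE \<omega> in M. 0 < C i \<omega>"
proof -
  note [measurable] = C_measurable[OF assms]
  have "prob {\<omega>\<in>space M. 0 < C i \<omega>} = measure (distr M borel (C i)) {0<..}"
    by (subst measure_distr) (auto intro!: arg_cong[where f=prob])
  also have "\<dots> = measure (distr M borel C0) {0<..}"
    by (simp add: C_distr[OF assms])
  also have "\<dots> = 1"
    by (subst measure_distr) (auto simp: C0_pos[symmetric] intro!: arg_cong[where f=prob])
  finally have "prob {\<omega>\<in>space M. 0 < C i \<omega>} = 1" .
  from AE_prob_1[OF this] show ?thesis
    by eventually_elim auto
qed

lemma integral_exp_C: assumes "1 \<le> i" shows "(\<integral>\<omega>. exp (- s * C i \<omega>) \<partial>M) = Lap M C0 s"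
proof -
  note [measurable] = C_measurable[OF assms]
  have "(\<integral>\<omega>. exp (- s * C i \<omega>) \<partial>M) = (\<integral>x. exp (- s * x) \<partial>distr M borel (C i))"
    by (subst integral_distr) auto
  also have "\<dots> = (\<integral>x. exp (- s * x) \<partial>distr M borel C0)"
    by (simp add: C_distr[OF assms])
  finally show ?thesis
    unfolding Lap_def by (subst (asm) integral_distr) auto
qed

lemma integrable_exp_C:
  assumes "1 \<le> i" "0 \<le> s" shows "integrable M (\<lambda>\<omega>. exp (- s * C i \<omega>))"
  using C_measurable[OF assms(1)] AE_C_pos[OF assms(1)] assms(2)
  by (intro integrable_const_bound[where B=1]) (auto elim!: eventually_mono)

lemma Lap_nonneg: "0 \<le> Lap M C0 s"
  unfolding Lap_def by (intro integral_nonneg_AE) auto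

lemma Lap_less_1: assumes "0 < s" shows "Lap M C0 s < 1"
proof -
  have "Lap M C0 s = (\<integral>\<omega>. exp (- s * C 1 \<omega>) \<partial>M)"
    using integral_exp_C[of 1] by simp
  also have "\<dots> < (\<integral>\<omega>. 1 \<partial>M)"
    using integrable_exp_C[of 1 s] assms AE_C_pos[of 1]
    by (intro integral_less_AE_space) (auto elim!: eventually_mono simp: emeasure_space_1)
  finally show ?thesis
    by (simp add: prob_space)
qed

lemma
  assumes "0 \<le> s"
  shows integral_exp_Dsum: "(\<integral>\<omega>. exp (- s * Dsum C n \<omega>) \<partial>M) = Lap M C0 s ^ n"
    and integrable_exp_Dsum: "integrable M (\<lambda>\<omega>. exp (- s * Dsum C n \<omega>))"
proof -
  let ?X = "\<lambda>i \<omega>. exp (- s * famRV Ys Yd C i \<omega>)"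
  have ind: "indep_vars (\<lambda>_. borel) ?X (IC ` {1..n})"
    by (rule indep_vars_compose2[OF indep_vars_subset[OF indep]]) (auto simp: Cidx_def)
  have int: "i \<in> IC ` {1..n} \<Longrightarrow> integrable M (?X i)" for i
    using integrable_exp_C[OF _ assms] by (auto simp: famRV_def)
  have prod: "exp (- s * Dsum C n \<omega>) = (\<Prod>i\<in>IC ` {1..n}. ?X i \<omega>)" for \<omega>
    by (simp add: Dsum_def sum_distrib_left exp_sum prod.reindex inj_on_def famRV_def flip: sum_negf)
  have "(\<integral>\<omega>. exp (- s * Dsum C n \<omega>) \<partial>M) = (\<Prod>i\<in>IC ` {1..n}. \<integral>\<omega>. ?X i \<omega> \<partial>M)"
    unfolding prod by (rule indep_vars_lebesgue_integral[OF _ ind int]) auto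
  also have "\<dots> = (\<Prod>i\<in>{1..n}. \<integral>\<omega>. exp (- s * C i \<omega>) \<partial>M)"
    by (subst prod.reindex) (auto simp: inj_on_def famRV_def)
  also have "\<dots> = (\<Prod>i\<in>{1..n}. Lap M C0 s)"
    by (intro prod.cong refl integral_exp_C) auto
  finally show "(\<integral>\<omega>. exp (- s * Dsum C n \<omega>) \<partial>M) = Lap M C0 s ^ n"
    by simp
  show "integrable M (\<lambda>\<omega>. exp (- s * Dsum C n \<omega>))"
    unfolding prod by (rule indep_vars_integrable[OF _ ind int]) auto
qed

text \<open>Chernoff: \<open>P(D\<^sub>n < m) \<le> e\<^sup>m L(1)\<^sup>n \<longrightarrow> 0\<close>.\<close>
lemma AE_Dsum_ge: "AE \<omega> in M. \<exists>n. real m \<le> Dsum C n \<omega>"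
proof -
  define A where "A = {\<omega>\<in>space M. \<forall>n. Dsum C n \<omega> < real m}"
  have [measurable]: "A \<in> sets M"
    unfolding A_def by measurable
  have "prob A \<le> Lap M C0 1 ^ n / exp (- real m)" for n
  proof -
    have "prob A \<le> prob {\<omega>\<in>space M. exp (- real m) \<le> exp (- 1 * Dsum C n \<omega>)}"
      by (rule finite_measure_mono) (auto simp: A_def less_imp_le)
    also have "\<dots> \<le> (\<integral>\<omega>. exp (- 1 * Dsum C n \<omega>) \<partial>M) / exp (- real m)"
      by (rule integral_Markov_inequality_measure[OF integrable_exp_Dsum]) auto
    finally show ?thesis
      using integral_exp_Dsum[of 1 n] by simp
  qed
  moreover have "(\<lambda>n. Lap M C0 1 ^ n / exp (- real m)) \<longlonglongrightarrow> 0"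
    using Lap_less_1[of 1] Lap_nonneg[of 1] by (intro tendsto_divide_zero LIMSEQ_power_zero) auto
  ultimately have "prob A = 0"
    using measure_nonneg[of M A] LIMSEQ_le_const[of _ 0 "prob A"] by (metis order.antisym)
  then show ?thesis
    using AE_prob_1[of "space M - A"] prob_compl[of A] by (auto simp: A_def not_less elim: eventually_mono)
qed

definition regular :: "'a \<Rightarrow> bool" where
  "regular \<omega> \<longleftrightarrow> (\<forall>i\<ge>1. 0 < C i \<omega>) \<and> (\<forall>t. \<exists>n. t \<le> Dsum C n \<omega>) \<and> 0 < Ys \<omega> \<and> 0 < Yd \<omega>"

lemma AE_regular: "AE \<omega> in M. regular \<omega>"
proof -
  have "AE \<omega> in M. \<forall>m. \<exists>n. real m \<le> Dsum C n \<omega>"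
    by (subst AE_all_countable) (auto intro: AE_Dsum_ge)
  moreover have "AE \<omega> in M. \<forall>i\<ge>1. 0 < C i \<omega>"
    by (subst AE_all_countable) (auto intro: AE_C_pos)
  ultimately show ?thesis
    using Ys_pos Yd_pos
  proof eventually_elim
    case (elim \<omega>)
    have "\<exists>n. t \<le> Dsum C n \<omega>" for t
      using real_arch_simple[of t] elim(1) by (meson order_trans)
    with elim show ?case
      by (simp add: regular_def)
  qed
qed

lemma regular_overshoot_nonneg: "regular \<omega> \<Longrightarrow> 0 \<le> overshoot C t \<omega>"
  unfolding regular_def by (blast intro: overshoot_nonneg)

lemma emeasure_Dsum_less_Ys:
  "emeasure M {\<omega>\<in>space M. Dsum C n \<omega> < Ys \<omega>} = (\<integral>\<^sup>+\<omega>. ennreal (surv M Ys (Dsum C n \<omega>)) \<partial>M)"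
  using emeasure_indep_var_less[OF indep_subfamily_pairs(1), of "\<lambda>c. Dsum coord n c" "\<lambda>w. w IYs"]
  by (simp add: Dsum_subfamily)

lemma nn_integral_Kr:
  "(\<integral>\<^sup>+\<omega>. ennreal (real (Kr C Ys \<omega>)) \<partial>M) = (\<Sum>n. \<integral>\<^sup>+\<omega>. ennreal (surv M Ys (Dsum C n \<omega>)) \<partial>M)"
proof -
  have "AE \<omega> in M. ennreal (real (Kr C Ys \<omega>)) = (\<Sum>n. indicator {\<omega>\<in>space M. Dsum C n \<omega> < Ys \<omega>} \<omega>)"
    using AE_regular AE_space
  proof eventually_elim
    case (elim \<omega>)
    then have "(\<Sum>n. of_bool (Dsum C n \<omega> < Ys \<omega>) :: ennreal) = of_nat (Kr C Ys \<omega>)"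
      unfolding Kr_def regular_def by (intro Bbar_eq_count) auto
    with elim show ?case
      by (simp add: indicator_def ennreal_of_nat_eq_real_of_nat)
  qed
  then have "(\<integral>\<^sup>+\<omega>. ennreal (real (Kr C Ys \<omega>)) \<partial>M)
      = (\<integral>\<^sup>+\<omega>. (\<Sum>n. indicator {\<omega>\<in>space M. Dsum C n \<omega> < Ys \<omega>} \<omega>) \<partial>M)"
    by (rule nn_integral_cong_AE)
  also have "\<dots> = (\<Sum>n. emeasure M {\<omega>\<in>space M. Dsum C n \<omega> < Ys \<omega>})"
    by (subst nn_integral_suminf) auto
  finally show ?thesis
    by (simp add: emeasure_Dsum_less_Ys)
qed

lemma one_minus_Pd_eq_prob: "1 - Pd M C Ys Yd = prob {\<omega>\<in>space M. overshoot C (Ys \<omega>) \<omega> < Yd \<omega>}"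
proof -
  have "{\<omega>\<in>space M. Zd Ys Yd \<omega> \<le> Vs C Ys \<omega>}
      = space M - {\<omega>\<in>space M. overshoot C (Ys \<omega>) \<omega> < Yd \<omega>}"
    by (auto simp: Zd_def Vs_eq_overshoot)
  then show ?thesis
    unfolding Pd_def by (simp add: prob_compl)
qed

lemma one_minus_Pd_eq_nn_integral:
  "ennreal (1 - Pd M C Ys Yd) = (\<integral>\<^sup>+\<omega>. ennreal (surv M Yd (overshoot C (Ys \<omega>) \<omega>)) \<partial>M)"
  using emeasure_indep_var_less[OF indep_subfamily_pairs(3),
      of "\<lambda>w. overshoot coord (w IYs) (restrict w Cidx)" "\<lambda>w. w IYd"]
  by (simp add: one_minus_Pd_eq_prob emeasure_eq_measure overshoot_subfamily)

lemma one_minus_Pd_eq_integral: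
  "1 - Pd M C Ys Yd = (\<integral>t. (\<integral>\<omega>. surv M Yd (Dsum C (Bbar C t \<omega>) \<omega> - t) \<partial>M) \<partial>distr M borel Ys)"
proof -
  let ?G = "\<lambda>t. \<integral>\<^sup>+\<omega>. ennreal (surv M Yd (overshoot C t \<omega>)) \<partial>M"
  have G_finite: "?G t < top" for t
  proof -
    have "?G t \<le> (\<integral>\<^sup>+\<omega>. 1 \<partial>M)"
      by (intro nn_integral_mono) (simp add: surv_le_1)
    then show ?thesis
      by (simp add: emeasure_space_1 le_less_trans)
  qed
  have "ennreal (1 - Pd M C Ys Yd) = (\<integral>\<^sup>+\<omega>'. (\<integral>\<^sup>+\<omega>. ennreal (surv M Yd (overshoot C (Ys \<omega>') \<omega>)) \<partial>M) \<partial>M)"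
    unfolding one_minus_Pd_eq_nn_integral
    using nn_integral_indep_var[OF indep_subfamily_pairs(2),
        of "\<lambda>a c. ennreal (surv M Yd (overshoot coord (a IYs) c))"]
    by (simp add: overshoot_subfamily)
  also have "\<dots> = (\<integral>\<^sup>+t. ?G t \<partial>distr M borel Ys)"
    by (subst nn_integral_distr) auto
  also have "\<dots> = (\<integral>\<^sup>+t. ennreal (enn2real (?G t)) \<partial>distr M borel Ys)"
    by (simp add: G_finite)
  finally have "1 - Pd M C Ys Yd = enn2real (\<integral>\<^sup>+t. ennreal (enn2real (?G t)) \<partial>distr M borel Ys)"
    by (metis Pd_def diff_ge_0_iff_ge enn2real_ennreal prob_le_1)
  also have "\<dots> = (\<integral>t. enn2real (?G t) \<partial>distr M borel Ys)"
    by (rule integral_eq_nn_integral[symmetric]) auto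
  also have "\<dots> = (\<integral>t. (\<integral>\<omega>. surv M Yd (overshoot C t \<omega>) \<partial>M) \<partial>distr M borel Ys)"
    by (intro Bochner_Integration.integral_cong refl integral_eq_nn_integral[symmetric])
       (auto simp: surv_nonneg)
  finally show ?thesis
    by (simp add: overshoot_def)
qed

lemma nn_integral_Xr_eq:
  "(\<integral>\<^sup>+\<omega>. ennreal (Xr C Ys Yd \<omega>) \<partial>M)
    = (\<integral>\<^sup>+\<omega>. ennreal (Ys \<omega>) \<partial>M) + (\<integral>\<^sup>+\<omega>. ennreal (min (overshoot C (Ys \<omega>) \<omega>) (Yd \<omega>)) \<partial>M)"
proof -
  have "AE \<omega> in M. ennreal (Xr C Ys Yd \<omega>) = ennreal (Ys \<omega>) + ennreal (min (overshoot C (Ys \<omega>) \<omega>) (Yd \<omega>))"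
    using AE_regular
  proof eventually_elim
    case (elim \<omega>)
    then have "0 \<le> Ys \<omega>" "0 \<le> min (overshoot C (Ys \<omega>) \<omega>) (Yd \<omega>)"
      using regular_overshoot_nonneg[of \<omega> "Ys \<omega>"] by (auto simp: regular_def)
    then show ?case
      by (simp add: Xr_eq_overshoot ennreal_plus)
  qed
  then have "(\<integral>\<^sup>+\<omega>. ennreal (Xr C Ys Yd \<omega>) \<partial>M)
      = (\<integral>\<^sup>+\<omega>. ennreal (Ys \<omega>) + ennreal (min (overshoot C (Ys \<omega>) \<omega>) (Yd \<omega>)) \<partial>M)"
    by (rule nn_integral_cong_AE)
  then show ?thesis
    by (simp add: nn_integral_add)
qed

lemma nn_integral_min_overshoot_Yd:
  "(\<integral>\<^sup>+\<omega>. ennreal (min (overshoot C (Ys \<omega>) \<omega>) (Yd \<omega>)) \<partial>M)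
    = (\<integral>\<^sup>+\<omega>'. (\<integral>\<^sup>+\<omega>. ennreal (min (overshoot C (Ys \<omega>') \<omega>') (Yd \<omega>)) \<partial>M) \<partial>M)"
  using nn_integral_indep_var[OF indep_subfamily_pairs(3),
      of "\<lambda>w d. ennreal (min (overshoot coord (w IYs) (restrict w Cidx)) (d IYd))"]
  by (simp add: overshoot_subfamily)

lemma nn_integral_Xr:
  "(\<integral>\<^sup>+\<omega>. ennreal (Xr C Ys Yd \<omega>) \<partial>M)
    = (\<integral>\<^sup>+\<omega>. ennreal (Ys \<omega>) \<partial>M)
      + (\<integral>\<^sup>+t. (\<integral>\<^sup>+y\<in>{0..}. ennreal (measure M {\<omega>\<in>space M. y < Dsum C (Bbar C t \<omega>) \<omega> - t} * surv M Yd y)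
          \<partial>lborel) \<partial>distr M borel Ys)"
proof -
  let ?H = "\<lambda>t \<omega>'. \<integral>\<^sup>+\<omega>. ennreal (min (overshoot C t \<omega>') (Yd \<omega>)) \<partial>M"
  have "(\<integral>\<^sup>+\<omega>'. ?H (Ys \<omega>') \<omega>' \<partial>M) = (\<integral>\<^sup>+\<omega>''. (\<integral>\<^sup>+\<omega>'. ?H (Ys \<omega>'') \<omega>' \<partial>M) \<partial>M)"
    using nn_integral_indep_var[OF indep_subfamily_pairs(2),
        of "\<lambda>a c. \<integral>\<^sup>+\<omega>. ennreal (min (overshoot coord (a IYs) c) (Yd \<omega>)) \<partial>M"]
    by (simp add: overshoot_subfamily)
  also have "\<dots> = (\<integral>\<^sup>+t. (\<integral>\<^sup>+\<omega>'. ?H t \<omega>' \<partial>M) \<partial>distr M borel Ys)"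
    by (subst nn_integral_distr) auto
  also have "\<dots> = (\<integral>\<^sup>+t. (\<integral>\<^sup>+y\<in>{0..}. ennreal (surv M (overshoot C t) y * surv M Yd y) \<partial>lborel) \<partial>distr M borel Ys)"
    by (simp add: nn_integral_min_eq_surv_product)
  finally show ?thesis
    unfolding nn_integral_Xr_eq nn_integral_min_overshoot_Yd by (simp add: surv_def overshoot_def)
qed

lemma integrable_Ys: "integrable M Ys"
proof (rule Bochner_Integration.integrable_bound[where f="\<lambda>\<omega>. 1 + (Ys \<omega>)\<^sup>2"])
  have "\<bar>y\<bar> \<le> 1 + y\<^sup>2" for y :: real
  proof -
    have "0 \<le> (\<bar>y\<bar> - 1)\<^sup>2"
      by simp
    then show ?thesis
      by (simp add: power2_eq_square algebra_simps abs_mult_self_eq)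
  qed
  then show "AE \<omega> in M. norm (Ys \<omega>) \<le> norm (1 + (Ys \<omega>)\<^sup>2)"
    by (intro AE_I2) (simp add: add_nonneg_nonneg)
qed (auto intro: Ys_square_integrable)

definition lag_discount :: "real \<Rightarrow> nat \<Rightarrow> 'a \<Rightarrow> real" where
  "lag_discount l k \<omega> = (if Ys \<omega> \<le> Dsum C k \<omega> then exp (- l * (Dsum C k \<omega> - Ys \<omega>)) else 0)"

definition detection_discount :: "real \<Rightarrow> nat \<Rightarrow> 'a \<Rightarrow> real" where
  "detection_discount l k \<omega> = (if Kr C Ys \<omega> = k then lag_discount l k \<omega> else 0)"

lemma lag_discount_measurable[measurable]: "lag_discount l k \<in> borel_measurable M"
  unfolding lag_discount_def by measurable

lemma detection_discount_measurable[measurable]: "detection_discount l k \<in> borel_measurable M"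
proof -
  have "(\<lambda>\<omega>. Bbar coord (Ys \<omega>) (subfamily Cidx \<omega>)) \<in> measurable M (count_space UNIV)"
    using measurable_compose[OF measurable_Pair[OF Ys_measurable measurable_subfamily(1)]
        measurable_Bbar[OF measurable_coord]] by simp
  then have "(\<lambda>\<omega>. Kr C Ys \<omega>) \<in> measurable M (count_space UNIV)"
    by (simp add: Kr_def Bbar_subfamily)
  then show ?thesis
    unfolding detection_discount_def by measurable
qed

lemma lag_discount_nonneg: "0 \<le> lag_discount l k \<omega>"
  and lag_discount_le_1: "0 \<le> l \<Longrightarrow> lag_discount l k \<omega> \<le> 1"
  and detection_discount_nonneg: "0 \<le> detection_discount l k \<omega>"
  and detection_discount_le_1: "0 \<le> l \<Longrightarrow> detection_discount l k \<omega> \<le> 1"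
  by (auto simp: lag_discount_def detection_discount_def)

lemma integrable_lag_discount: "0 \<le> l \<Longrightarrow> integrable M (lag_discount l k)"
  by (rule integrable_const_bound[where B=1]) (auto simp: lag_discount_nonneg lag_discount_le_1)

lemma integrable_detection_discount: "0 \<le> l \<Longrightarrow> integrable M (detection_discount l k)"
  by (rule integrable_const_bound[where B=1]) (auto simp: detection_discount_nonneg detection_discount_le_1)

lemma lag_discount_Suc:
  assumes "regular \<omega>"
  shows "lag_discount l (Suc j) \<omega>
    = exp (- l * C (Suc j) \<omega>) * lag_discount l j \<omega> + detection_discount l (Suc j) \<omega>"
proof -
  have Kr: "Kr C Ys \<omega> = Suc j \<longleftrightarrow> Dsum C j \<omega> < Ys \<omega> \<and> Ys \<omega> \<le> Dsum C (Suc j) \<omega>"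
    using assms unfolding Kr_def regular_def by (intro Bbar_eq_iff) auto
  have "exp (- l * (Dsum C (Suc j) \<omega> - Ys \<omega>)) = exp (- l * C (Suc j) \<omega>) * exp (- l * (Dsum C j \<omega> - Ys \<omega>))"
    by (simp add: Dsum_Suc algebra_simps flip: exp_add)
  moreover have "0 < C (Suc j) \<omega>"
    using assms by (simp add: regular_def)
  ultimately show ?thesis
    using Kr by (auto simp: lag_discount_def detection_discount_def Dsum_Suc)
qed

lemma indep_exp_C_lag_discount: "indep_var borel (\<lambda>\<omega>. exp (- l * C (Suc j) \<omega>)) borel (lag_discount l j)"
proof -
  let ?A = "{IC (Suc j)}" and ?B = "insert IYs (IC ` {1..j})"
  define f where "f w = exp (- l * w (IC (Suc j)))" for w :: "idx \<Rightarrow> real"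
  define g where "g w = (let d = \<Sum>i\<in>{1..j}. w (IC i) in if w IYs \<le> d then exp (- l * (d - w IYs)) else 0)"
    for w :: "idx \<Rightarrow> real"
  have [measurable]: "(\<lambda>w. w (IC (Suc j))) \<in> borel_measurable (PiM ?A (\<lambda>_. borel :: real measure))"
    "(\<lambda>w. w IYs) \<in> borel_measurable (PiM ?B (\<lambda>_. borel :: real measure))"
    by (auto intro: measurable_component_singleton)
  have [measurable]: "(\<lambda>w. \<Sum>i\<in>{1..j}. w (IC i)) \<in> borel_measurable (PiM ?B (\<lambda>_. borel :: real measure))"
    by (intro borel_measurable_sum measurable_component_singleton) auto
  have "f \<in> borel_measurable (PiM ?A (\<lambda>_. borel))" "g \<in> borel_measurable (PiM ?B (\<lambda>_. borel))"
    unfolding f_def g_def Let_def by measurable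
  then have "indep_var borel (f \<circ> subfamily ?A) borel (g \<circ> subfamily ?B)"
    by (intro indep_var_compose[OF indep_subfamily]) (auto simp: Cidx_def)
  moreover have "f \<circ> subfamily ?A = (\<lambda>\<omega>. exp (- l * C (Suc j) \<omega>))"
    by (auto simp: f_def subfamily_def famRV_def)
  moreover have "g \<circ> subfamily ?B = lag_discount l j"
    by (auto simp: g_def subfamily_def famRV_def lag_discount_def Dsum_def fun_eq_iff)
  ultimately show ?thesis
    by simp
qed

lemma integral_lag_discount_Suc:
  assumes "0 \<le> l"
  shows "(\<integral>\<omega>. lag_discount l (Suc j) \<omega> \<partial>M)
    = Lap M C0 l * (\<integral>\<omega>. lag_discount l j \<omega> \<partial>M) + (\<integral>\<omega>. detection_discount l (Suc j) \<omega> \<partial>M)"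
proof -
  note [measurable] = C_measurable[of "Suc j", simplified]
  have int_exp: "integrable M (\<lambda>\<omega>. exp (- l * C (Suc j) \<omega>))"
    using assms by (intro integrable_exp_C) auto
  note int_lag = integrable_lag_discount[OF assms]
  have "(\<integral>\<omega>. lag_discount l (Suc j) \<omega> \<partial>M)
      = (\<integral>\<omega>. exp (- l * C (Suc j) \<omega>) * lag_discount l j \<omega> + detection_discount l (Suc j) \<omega> \<partial>M)"
    using AE_regular by (intro integral_cong_AE) (auto elim!: eventually_mono intro: C_measurable simp: lag_discount_Suc)
  also have "\<dots> = (\<integral>\<omega>. exp (- l * C (Suc j) \<omega>) * lag_discount l j \<omega> \<partial>M)
      + (\<integral>\<omega>. detection_discount l (Suc j) \<omega> \<partial>M)"
    using indep_var_integrable[OF indep_exp_C_lag_discount int_exp int_lag]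
      integrable_detection_discount[OF assms] by (rule Bochner_Integration.integral_add)
  finally show ?thesis
    using indep_var_lebesgue_integral[OF indep_exp_C_lag_discount int_exp int_lag]
      integral_exp_C[of "Suc j" l] by simp
qed

lemma suminf_detection_discount:
  assumes "regular \<omega>"
  shows "(\<Sum>j. ennreal (detection_discount l (Suc j) \<omega>)) = ennreal (exp (- l * overshoot C (Ys \<omega>) \<omega>))"
proof -
  have pos: "\<forall>i\<ge>1. 0 < C i \<omega>" and unbounded: "\<forall>t. \<exists>n. t \<le> Dsum C n \<omega>"
    using assms by (auto simp: regular_def)
  define K where "K = Kr C Ys \<omega>"
  have "1 \<le> K"
    unfolding K_def Kr_def by (rule Bbar_ge_1[OF pos unbounded])
  then have "(\<Sum>j. ennreal (detection_discount l (Suc j) \<omega>)) = ennreal (detection_discount l K \<omega>)"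
    by (subst suminf_finite[of "{K - 1}"]) (auto simp: detection_discount_def K_def)
  also have "\<dots> = ennreal (exp (- l * overshoot C (Ys \<omega>) \<omega>))"
    using le_Dsum_Bbar[OF pos unbounded, of "Ys \<omega>"]
    by (simp add: detection_discount_def lag_discount_def K_def Kr_def overshoot_def)
  finally show ?thesis .
qed

lemma integral_laplace_term:
  assumes "0 \<le> l"
  shows "(\<integral>\<omega>. exp (- l * Dsum C k \<omega>) * (\<integral>t. indicator {0..Dsum C k \<omega>} t * exp (l * t) \<partial>distr M borel Ys) \<partial>M)
    = (\<integral>\<omega>. lag_discount l k \<omega> \<partial>M)"
proof -
  define \<rho> where "\<rho> x t = (if 0 \<le> t \<and> t \<le> x then exp (- l * (x - t)) else 0)" for x t :: real
  have [measurable]: "(\<lambda>(x, t). \<rho> x t) \<in> borel_measurable (borel \<Otimes>\<^sub>M borel)"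
    unfolding \<rho>_def by measurable
  have inner: "exp (- l * x) * (\<integral>t. indicator {0..x} t * exp (l * t) \<partial>distr M borel Ys) = (\<integral>\<omega>. \<rho> x (Ys \<omega>) \<partial>M)"
    for x
  proof -
    have "exp (- l * x) * (indicator {0..x} t * exp (l * t)) = \<rho> x t" for t
    proof -
      have "exp (- l * x) * exp (l * t) = exp (- l * (x - t))"
        by (subst exp_add[symmetric]) (simp add: algebra_simps)
      then show ?thesis
        by (simp add: \<rho>_def indicator_def)
    qed
    then have "exp (- l * x) * (\<integral>t. indicator {0..x} t * exp (l * t) \<partial>distr M borel Ys) = (\<integral>t. \<rho> x t \<partial>distr M borel Ys)"
      by (simp flip: integral_mult_right_zero)
    then show ?thesis
      by (simp add: integral_distr)
  qed
  have "(\<integral>\<omega>'. (\<integral>\<omega>. \<rho> (Dsum C k \<omega>') (Ys \<omega>) \<partial>M) \<partial>M) = (\<integral>\<omega>. \<rho> (Dsum C k \<omega>) (Ys \<omega>) \<partial>M)"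
  proof -
    have "(\<lambda>(c, w). \<rho> (Dsum coord k c) (w IYs)) \<in> borel_measurable (PiM Cidx (\<lambda>_. borel) \<Otimes>\<^sub>M PiM {IYs} (\<lambda>_. borel))"
      by measurable
    moreover have "0 \<le> \<rho> x t" "\<rho> x t \<le> 1" for x t
      using assms by (auto simp: \<rho>_def)
    ultimately show ?thesis
      using integral_indep_var[OF indep_subfamily_pairs(1), of "\<lambda>c w. \<rho> (Dsum coord k c) (w IYs)" 1]
      by (simp add: Dsum_subfamily)
  qed
  also have "\<dots> = (\<integral>\<omega>. lag_discount l k \<omega> \<partial>M)"
    using Ys_pos by (intro integral_cong_AE) (auto elim!: eventually_mono simp: \<rho>_def lag_discount_def)
  finally show ?thesis
    by (simp only: inner)
qed

lemma measure_distr_Ys_0: "measure (distr M borel Ys) {0} = 0"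
proof -
  have "measure (distr M borel Ys) {0} = prob {\<omega>\<in>space M. Ys \<omega> = 0}"
    by (subst measure_distr) (auto intro!: arg_cong[where f=prob])
  also have "\<dots> = 0"
    using Ys_pos by (intro prob_eq_0_AE) (auto elim!: eventually_mono)
  finally show ?thesis .
qed

context
  fixes l :: real
  assumes l_pos: "0 < l" and Yd_exponential: "distributed M lborel Yd (exponential_density l)"
begin

lemma surv_Yd: "0 \<le> y \<Longrightarrow> surv M Yd y = exp (- y * l)"
  unfolding surv_def using exponential_distributedD_gt[OF Yd_exponential _ l_pos] by simp

text \<open>Memorylessness of \<open>Y\<^sup>d\<close>.\<close>
lemma one_minus_Pd_exponential:
  "ennreal (1 - Pd M C Ys Yd) = (\<integral>\<^sup>+\<omega>. ennreal (exp (- l * overshoot C (Ys \<omega>) \<omega>)) \<partial>M)"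
  unfolding one_minus_Pd_eq_nn_integral
  using AE_regular by (intro nn_integral_cong_AE)
    (auto elim!: eventually_mono simp: surv_Yd regular_overshoot_nonneg mult.commute)

lemma detection_discount_sums: "(\<lambda>j. \<integral>\<omega>. detection_discount l (Suc j) \<omega> \<partial>M) sums (1 - Pd M C Ys Yd)"
proof -
  have int_eq: "(\<integral>\<^sup>+\<omega>. ennreal (detection_discount l (Suc j) \<omega>) \<partial>M) = ennreal (\<integral>\<omega>. detection_discount l (Suc j) \<omega> \<partial>M)"
    for j using l_pos by (intro nn_integral_eq_integral integrable_detection_discount) (auto simp: detection_discount_nonneg)
  have nonneg: "0 \<le> (\<integral>\<omega>. detection_discount l (Suc j) \<omega> \<partial>M)" for j
    by (simp add: detection_discount_nonneg)
  have "(\<Sum>j. ennreal (\<integral>\<omega>. detection_discount l (Suc j) \<omega> \<partial>M))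
      = (\<integral>\<^sup>+\<omega>. (\<Sum>j. ennreal (detection_discount l (Suc j) \<omega>)) \<partial>M)"
    by (simp add: nn_integral_suminf flip: int_eq)
  also have "\<dots> = ennreal (1 - Pd M C Ys Yd)"
    unfolding one_minus_Pd_exponential
    using AE_regular by (intro nn_integral_cong_AE) (auto elim!: eventually_mono simp: suminf_detection_discount)
  finally have sum_eq: "(\<Sum>j. ennreal (\<integral>\<omega>. detection_discount l (Suc j) \<omega> \<partial>M)) = ennreal (1 - Pd M C Ys Yd)" .
  have summable: "summable (\<lambda>j. \<integral>\<omega>. detection_discount l (Suc j) \<omega> \<partial>M)"
    using nonneg sum_eq by (intro summable_suminf_not_top) auto
  have "(\<Sum>j. \<integral>\<omega>. detection_discount l (Suc j) \<omega> \<partial>M) = 1 - Pd M C Ys Yd"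
    using sum_eq suminf_ennreal2[OF nonneg summable] suminf_nonneg[OF summable nonneg]
    by (simp add: Pd_def)
  with summable show ?thesis
    by (metis summable_sums)
qed

lemma one_minus_Pd_laplace_series:
  "let S = (\<lambda>k. \<integral>\<omega>. exp (- l * Dsum C (Suc k) \<omega>) *
                 (\<integral>t. indicator {0..Dsum C (Suc k) \<omega>} t * exp (l * t) \<partial>distr M borel Ys) \<partial>M)
   in summable S \<and> 1 - Pd M C Ys Yd = (1 - Lap M C0 l) * (\<Sum>k. S k) - Lap M C0 l * measure (distr M borel Ys) {0}"
proof -
  have "(\<integral>\<omega>. lag_discount l 0 \<omega> \<partial>M) = (\<integral>\<omega>. 0 \<partial>M)"
    using Ys_pos by (intro integral_cong_AE) (auto elim!: eventually_mono simp: lag_discount_def)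
  then have "summable (\<lambda>k. \<integral>\<omega>. lag_discount l (Suc k) \<omega> \<partial>M)
      \<and> 1 - Pd M C Ys Yd = (1 - Lap M C0 l) * (\<Sum>k. \<integral>\<omega>. lag_discount l (Suc k) \<omega> \<partial>M)"
    using l_pos by (intro linear_recurrence_sums[where b="\<lambda>j. \<integral>\<omega>. detection_discount l (Suc j) \<omega> \<partial>M"] Lap_nonneg Lap_less_1 integral_lag_discount_Suc
        detection_discount_sums integral_nonneg_AE) (auto simp: lag_discount_nonneg detection_discount_nonneg)
  then show ?thesis
    unfolding Let_def integral_laplace_term[OF less_imp_le[OF l_pos]] measure_distr_Ys_0 by simp
qed

lemma nn_integral_min_Yd:
  assumes "0 \<le> a"
  shows "(\<integral>\<^sup>+\<omega>. ennreal (min a (Yd \<omega>)) \<partial>M) = ennreal ((1 - exp (- a * l)) / l)"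
proof -
  have "(\<integral>\<^sup>+\<omega>. ennreal (min a (Yd \<omega>)) \<partial>M) = (\<integral>\<^sup>+\<omega>'. (\<integral>\<^sup>+\<omega>. ennreal (min a (Yd \<omega>)) \<partial>M) \<partial>M)"
    by (simp add: emeasure_space_1)
  also have "\<dots> = (\<integral>\<^sup>+y\<in>{0..}. ennreal (surv M (\<lambda>_. a) y * surv M Yd y) \<partial>lborel)"
    using nn_integral_min_eq_surv_product[of "\<lambda>_. a" Yd] by simp
  also have "\<dots> = (\<integral>\<^sup>+y. ennreal (exp (- y * l)) * indicator {0..a} y \<partial>lborel)"
    using AE_lborel_singleton[of a]
  proof (intro nn_integral_cong_AE, eventually_elim)
    case (elim y)
    have "surv M (\<lambda>_. a) y = of_bool (y < a)"
      by (simp add: surv_def prob_space)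
    with elim show ?case
      by (auto simp: surv_Yd indicator_def)
  qed
  also have "\<dots> = ennreal ((- exp (- a * l) / l) - (- exp (- 0 * l) / l))"
    using assms l_pos
    by (intro nn_integral_FTC_Icc) (auto intro!: derivative_eq_intros)
  finally show ?thesis
    using l_pos by (simp add: field_simps)
qed

lemma nn_integral_min_overshoot_Yd_exponential:
  "(\<integral>\<^sup>+\<omega>. ennreal (min (overshoot C (Ys \<omega>) \<omega>) (Yd \<omega>)) \<partial>M) = ennreal (Pd M C Ys Yd / l)"
proof -
  let ?E = "\<lambda>\<omega>. exp (- l * overshoot C (Ys \<omega>) \<omega>)"
  have E_bounded: "AE \<omega> in M. 0 \<le> ?E \<omega> \<and> ?E \<omega> \<le> 1"
    using AE_regular by eventually_elim (use l_pos in \<open>auto simp: regular_overshoot_nonneg\<close>)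
  have E_integrable: "integrable M ?E"
    using E_bounded by (intro integrable_const_bound[where B=1]) (auto elim: eventually_mono)
  have "ennreal (1 - Pd M C Ys Yd) = ennreal (\<integral>\<omega>. ?E \<omega> \<partial>M)"
    unfolding one_minus_Pd_exponential by (intro nn_integral_eq_integral E_integrable) auto
  then have E_integral: "(\<integral>\<omega>. ?E \<omega> \<partial>M) = 1 - Pd M C Ys Yd"
    by (subst (asm) ennreal_inj) (auto simp: Pd_def)
  have "(\<integral>\<^sup>+\<omega>. ennreal (min (overshoot C (Ys \<omega>) \<omega>) (Yd \<omega>)) \<partial>M)
      = (\<integral>\<^sup>+\<omega>. ennreal ((1 - ?E \<omega>) / l) \<partial>M)"
    unfolding nn_integral_min_overshoot_Yd using AE_regular
    by (intro nn_integral_cong_AE) (auto elim!: eventually_mono simp: nn_integral_min_Yd regular_overshoot_nonneg mult.commute)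
  also have "\<dots> = ennreal (\<integral>\<omega>. (1 - ?E \<omega>) / l \<partial>M)"
    using E_bounded E_integrable l_pos by (intro nn_integral_eq_integral) (auto elim!: eventually_mono)
  also have "(\<integral>\<omega>. (1 - ?E \<omega>) / l \<partial>M) = Pd M C Ys Yd / l"
    using E_integrable E_integral by (simp add: prob_space)
  finally show ?thesis .
qed

lemma integral_Xr_exponential: "(\<integral>\<omega>. Xr C Ys Yd \<omega> \<partial>M) = (\<integral>\<omega>. Ys \<omega> \<partial>M) + Pd M C Ys Yd / l"
proof -
  have Xr_measurable: "Xr C Ys Yd \<in> borel_measurable M"
    unfolding Xr_eq_overshoot[abs_def] by measurable
  have "AE \<omega> in M. 0 \<le> Xr C Ys Yd \<omega>"
    using AE_regular by eventually_elim (auto simp: Xr_eq_overshoot regular_def regular_overshoot_nonneg)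
  then have "(\<integral>\<omega>. Xr C Ys Yd \<omega> \<partial>M) = enn2real (\<integral>\<^sup>+\<omega>. ennreal (Xr C Ys Yd \<omega>) \<partial>M)"
    by (rule integral_eq_nn_integral[OF Xr_measurable])
  also have "\<dots> = enn2real (ennreal (\<integral>\<omega>. Ys \<omega> \<partial>M) + ennreal (Pd M C Ys Yd / l))"
    unfolding nn_integral_Xr_eq nn_integral_min_overshoot_Yd_exponential
    using Ys_pos by (subst nn_integral_eq_integral) (auto intro: integrable_Ys elim: eventually_mono)
  also have "\<dots> = (\<integral>\<omega>. Ys \<omega> \<partial>M) + Pd M C Ys Yd / l"
    using Ys_pos l_pos by (simp add: integral_nonneg_AE Pd_def eventually_mono less_imp_le flip: ennreal_plus)
  finally show ?thesis .
qed

end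

end

theorem mainTheorem1:
  fixes M :: "'a measure" and Ys Yd C0 :: "'a \<Rightarrow> real" and C :: "nat \<Rightarrow> 'a \<Rightarrow> real"
  assumes P: "prob_space M"
    and Ys_pos: "AE \<omega> in M. 0 < Ys \<omega>"
    and Yd_pos: "AE \<omega> in M. 0 < Yd \<omega>"
    and C0_rv: "C0 \<in> borel_measurable M"
    and C0_pos: "measure M {\<omega>\<in>space M. 0 < C0 \<omega>} = 1"
    and iid: "\<And>i. 1 \<le> i \<Longrightarrow> distr M borel (C i) = distr M borel C0"
    and indep: "prob_space.indep_vars M (\<lambda>_. borel) (famRV Ys Yd C)
                  ({IYs, IYd} \<union> {IC i | i. 1 \<le> i})"
    and mom_Ys: "integrable M (\<lambda>\<omega>. (Ys \<omega>)\<^sup>2)"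
    and mom_C: "integrable M (\<lambda>\<omega>. (C0 \<omega>)\<^sup>2)"
  shows
    "(\<integral>\<^sup>+\<omega>. ennreal (real (Kr C Ys \<omega>)) \<partial>M)
        = (\<Sum>n. \<integral>\<^sup>+\<omega>. ennreal (surv M Ys (Dsum C n \<omega>)) \<partial>M)
     \<and> 1 - Pd M C Ys Yd
        = (\<integral>t. (\<integral>\<omega>. surv M Yd (Dsum C (Bbar C t \<omega>) \<omega> - t) \<partial>M) \<partial>(distr M borel Ys))
     \<and> (\<integral>\<^sup>+\<omega>. ennreal (Xr C Ys Yd \<omega>) \<partial>M)
        = (\<integral>\<^sup>+\<omega>. ennreal (Ys \<omega>) \<partial>M)
          + (\<integral>\<^sup>+t. (\<integral>\<^sup>+y\<in>{0..}.
                ennreal (measure M {\<omega>\<in>space M. y < Dsum C (Bbar C t \<omega>) \<omega> - t} * surv M Yd y)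
              \<partial>lborel) \<partial>(distr M borel Ys))
     \<and> (\<forall>l>0. distributed M lborel Yd (exponential_density l) \<longrightarrow>
          (let S = (\<lambda>k. \<integral>\<omega>. exp (- l * Dsum C (Suc k) \<omega>) *
                     (\<integral>t. indicator {0..Dsum C (Suc k) \<omega>} t * exp (l * t) \<partial>(distr M borel Ys)) \<partial>M)
           in summable S
              \<and> 1 - Pd M C Ys Yd
                  = (1 - Lap M C0 l) * (\<Sum>k. S k) - Lap M C0 l * measure (distr M borel Ys) {0})
          \<and> (\<integral>\<omega>. Xr C Ys Yd \<omega> \<partial>M) = (\<integral>\<omega>. Ys \<omega> \<partial>M) + Pd M C Ys Yd / l)"
proof -
  interpret inspection_model M Ys Yd C0 C
    using P Ys_pos Yd_pos C0_rv C0_pos iid indep mom_Ys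
    unfolding inspection_model_def inspection_model_axioms_def Cidx_def by blast
  show ?thesis
    using nn_integral_Kr one_minus_Pd_eq_integral nn_integral_Xr
      one_minus_Pd_laplace_series integral_Xr_exponential
    by blast
qed

end
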